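(* Let $a,b\in\mathbb{Q}$ be such that $g(x)=x^4+ax^2+b$ is irreducible over $\mathbb{Q}$, and let $\theta$ be a root of $g(x)$. Then for every $r\in\mathbb{Q}\setminus\mathbb{Q}^2$, we have $r\in\mathbb{Q}(\theta)^2$ if and only if at least one of $r(a^2-4b)$, $r(-a+2\sqrt{b})$, $r(-a-2\sqrt{b})$ lies in $\mathbb{Q}^2$.
   Context: For a field $K$, $K^2$ denotes the set of squares in $K$; $\mathbb{Q}^2$ is the set of rational squares. $\sqrt{b}$ denotes a fixed complex square root of $b$. *)

theory Defs
  imports Complex_Main "HOL-Computational_Algebra.Polynomial"
begin

definition gen_field :: "complex \<Rightarrow> complex set" where
  "gen_field \<theta> = \<Inter> {K. 0 \<in> K \<and> 1 \<in> K \<and> \<theta> \<in> K \<and>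
      (\<forall>x\<in>K. \<forall>y\<in>K. x + y \<in> K \<and> x * y \<in> K) \<and>
      (\<forall>x\<in>K. - x \<in> K) \<and> (\<forall>x\<in>K. x \<noteq> 0 \<longrightarrow> inverse x \<in> K)}"

definition squares_in :: "complex set \<Rightarrow> complex set" where
  "squares_in K = {y ^ 2 | y. y \<in> K}"

definition rat_squares :: "complex set" where
  "rat_squares = {of_rat q ^ 2 | q. True}"

end

(* Irreducibility of g makes 1, theta, theta^2, theta^3 linearly independent over Q, so every
   element of Q(theta) is u + v theta with u, v in Q(theta^2) = Q + Q theta^2.  If (u + v theta)^2
   is a rational r, its theta-component 2uv vanishes.  If v = 0, u is a square root of r in
   Q(theta^2), which is generated by the square root 2 theta^2 + a of a^2 - 4b; as r is not a
   rational square, u is a rational multiple of 2 theta^2 + a, so r (a^2 - 4b) is a rational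
   square.  If u = 0, then theta^2 = r s^2 with s = 1/v in Q(theta^2), and comparing
   coefficients gives b = c^2 with c rational and r (2c - a) a rational square.  Conversely,
   Q(theta) contains the square roots 2 theta^2 + a of a^2 - 4b and theta + c/theta of 2c - a
   (where c^2 = b), and r is a rational square divided by one of these squares. *)

theory Submission
  imports Defs "HOL-Computational_Algebra.Polynomial_Factorial" "HOL-Computational_Algebra.Field_as_Ring"
begin

lemma map_poly_of_rat_add:
  "map_poly (of_rat :: rat \<Rightarrow> 'a::field_char_0) (p + q) = map_poly of_rat p + map_poly of_rat q"
  by (intro poly_eqI) (simp add: coeff_map_poly of_rat_add)

lemma map_poly_of_rat_mult:
  "map_poly (of_rat :: rat \<Rightarrow> 'a::field_char_0) (p * q) = map_poly of_rat p * map_poly of_rat q"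
  by (intro poly_eqI) (simp add: coeff_map_poly coeff_mult of_rat_sum of_rat_mult)

lemma irreducible_root_lower_degree_eq_0:
  fixes p q :: "rat poly" and x :: "'a::field_char_0"
  assumes irr: "irreducible p" and p_root: "poly (map_poly of_rat p) x = 0"
    and q_root: "poly (map_poly of_rat q) x = 0" and deg: "degree q < degree p"
  shows "q = 0"
proof (rule ccontr)
  assume "q \<noteq> 0"
  then have "\<not> p dvd q"
    using deg by (auto dest: dvd_imp_degree_le)
  then have "coprime p q"
    using irr by (simp add: prime_elem_imp_coprime flip: prime_elem_iff_irreducible)
  then have "fst (bezout_coefficients p q) * p + snd (bezout_coefficients p q) * q = 1"
    using bezout_coefficients_fst_snd[of p q] by simp
  then have "poly (map_poly of_rat (fst (bezout_coefficients p q) * p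
      + snd (bezout_coefficients p q) * q)) x = (1 :: 'a)"
    by simp
  with p_root q_root show False
    by (simp add: map_poly_of_rat_add map_poly_of_rat_mult)
qed

definition is_subfield :: "complex set \<Rightarrow> bool" where
  "is_subfield K \<longleftrightarrow> 0 \<in> K \<and> 1 \<in> K \<and> (\<forall>x\<in>K. \<forall>y\<in>K. x + y \<in> K \<and> x * y \<in> K) \<and>
     (\<forall>x\<in>K. - x \<in> K) \<and> (\<forall>x\<in>K. x \<noteq> 0 \<longrightarrow> inverse x \<in> K)"

lemma gen_field_eq: "gen_field \<theta> = \<Inter> {K. is_subfield K \<and> \<theta> \<in> K}"
  unfolding gen_field_def is_subfield_def by (intro arg_cong[where f = Inter]) blast

lemma is_subfield_gen_field: "is_subfield (gen_field \<theta>)"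
  unfolding gen_field_eq is_subfield_def by blast

lemma in_gen_field: "\<theta> \<in> gen_field \<theta>"
  unfolding gen_field_eq by blast

lemma gen_field_least: "is_subfield K \<Longrightarrow> \<theta> \<in> K \<Longrightarrow> gen_field \<theta> \<subseteq> K"
  unfolding gen_field_eq by blast

lemma subfield_add: "is_subfield K \<Longrightarrow> x \<in> K \<Longrightarrow> y \<in> K \<Longrightarrow> x + y \<in> K"
  and subfield_mult: "is_subfield K \<Longrightarrow> x \<in> K \<Longrightarrow> y \<in> K \<Longrightarrow> x * y \<in> K"
  and subfield_inverse: "is_subfield K \<Longrightarrow> x \<in> K \<Longrightarrow> inverse x \<in> K"
  unfolding is_subfield_def by (metis inverse_zero)+

lemma subfield_of_rat:
  assumes K: "is_subfield K"
  shows "of_rat q \<in> K"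
proof -
  have of_nat: "of_nat n \<in> K" for n
    by (induction n) (use K in \<open>auto simp: is_subfield_def\<close>)
  have of_int: "of_int i \<in> K" for i
  proof (cases i rule: int_cases)
    case (neg n)
    then show ?thesis
      using of_nat[of "Suc n"] K unfolding is_subfield_def by (simp del: of_nat_Suc)
  qed (simp add: of_nat)
  obtain n d where "q = of_int n / of_int d"
    by (metis Fract_of_int_quotient Rat_cases)
  then have "of_rat q = of_int n * inverse (of_int d :: complex)"
    by (simp add: divide_inverse of_rat_mult of_rat_inverse)
  then show ?thesis
    using K by (simp add: subfield_mult subfield_inverse of_int)
qed

lemma squares_in_gen_field_if_mult_square:
  assumes "w \<in> gen_field \<theta>" "w \<noteq> 0" "x * w ^ 2 = of_rat s ^ 2"
  shows "x \<in> squares_in (gen_field \<theta>)"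
proof -
  have "x = (of_rat s / w) ^ 2"
    using assms(2,3) by (simp add: power_divide eq_divide_eq)
  moreover have "of_rat s / w \<in> gen_field \<theta>"
    unfolding divide_inverse using assms(1) is_subfield_gen_field
    by (intro subfield_mult subfield_inverse subfield_of_rat)
  ultimately show ?thesis
    unfolding squares_in_def by blast
qed

lemma of_rat_in_rat_squares_iff: "of_rat x \<in> rat_squares \<longleftrightarrow> (\<exists>q. x = q ^ 2)"
  unfolding rat_squares_def by (auto simp flip: of_rat_power)

definition rat_span :: "complex \<Rightarrow> complex set" where
  "rat_span t = {of_rat A + of_rat B * t | A B. True}"

lemma rat_spanI: "of_rat A + of_rat B * t \<in> rat_span t"
  unfolding rat_span_def by blast

lemma rat_spanE:
  assumes "u \<in> rat_span t"
  obtains A B where "u = of_rat A + of_rat B * t"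
  using assms unfolding rat_span_def by blast

lemma of_rat_in_rat_span: "of_rat c \<in> rat_span t"
  using rat_spanI[of c 0 t] by simp

lemma zero_in_rat_span: "0 \<in> rat_span t"
  and one_in_rat_span: "1 \<in> rat_span t"
  using of_rat_in_rat_span[of 0 t] of_rat_in_rat_span[of 1 t] by simp_all

lemma self_in_rat_span: "t \<in> rat_span t"
  using rat_spanI[of 0 1 t] by simp

lemma rat_span_add:
  assumes "u \<in> rat_span t" "v \<in> rat_span t"
  shows "u + v \<in> rat_span t"
proof -
  obtain A B A' B' where "u = of_rat A + of_rat B * t" "v = of_rat A' + of_rat B' * t"
    using assms by (elim rat_spanE)
  then have "u + v = of_rat (A + A') + of_rat (B + B') * t"
    by (simp add: of_rat_add algebra_simps)
  then show ?thesis
    by (simp only: rat_spanI)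
qed

lemma rat_span_uminus:
  assumes "u \<in> rat_span t"
  shows "- u \<in> rat_span t"
proof -
  obtain A B where "u = of_rat A + of_rat B * t"
    using assms by (elim rat_spanE)
  then have "- u = of_rat (- A) + of_rat (- B) * t"
    by (simp add: of_rat_minus)
  then show ?thesis
    by (simp only: rat_spanI)
qed

lemma rat_span_diff: "u \<in> rat_span t \<Longrightarrow> v \<in> rat_span t \<Longrightarrow> u - v \<in> rat_span t"
  unfolding diff_conv_add_uminus by (intro rat_span_add rat_span_uminus)

definition tower_span :: "complex \<Rightarrow> complex set" where
  "tower_span \<theta> = {u + v * \<theta> | u v. u \<in> rat_span (\<theta> ^ 2) \<and> v \<in> rat_span (\<theta> ^ 2)}"

locale biquadratic_root =
  fixes a b :: rat and \<theta> :: complex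
  assumes irred: "irreducible [:b, 0, a, 0, 1:]"
    and root: "poly (map_poly of_rat [:b, 0, a, 0, 1:]) \<theta> = 0"
begin

lemma theta_pow4: "\<theta> ^ 4 = - of_rat a * \<theta> ^ 2 - of_rat b"
proof -
  have "poly (map_poly of_rat [:b, 0, a, 0, 1:]) \<theta> = \<theta> ^ 4 + of_rat a * \<theta> ^ 2 + of_rat b"
    by (simp add: map_poly_pCons algebra_simps power2_eq_square power4_eq_xxxx)
  with root show ?thesis
    by (simp add: eq_neg_iff_add_eq_0 algebra_simps)
qed

lemma rat_lin_indep:
  assumes "of_rat p0 + of_rat p1 * \<theta> + of_rat p2 * \<theta> ^ 2 + of_rat p3 * \<theta> ^ 3 = 0"
  shows "p0 = 0 \<and> p1 = 0 \<and> p2 = 0 \<and> p3 = 0"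
proof -
  have "poly (map_poly of_rat [:p0, p1, p2, p3:]) \<theta> = 0"
    using assms by (simp add: map_poly_pCons algebra_simps power2_eq_square power3_eq_cube)
  moreover have "degree [:p0, p1, p2, p3:] < degree [:b, 0, a, 0, 1 :: rat:]"
    by (rule le_less_trans[of _ 3]) (auto intro: degree_le simp: coeff_pCons split: nat.splits)
  ultimately have "[:p0, p1, p2, p3:] = 0"
    using irreducible_root_lower_degree_eq_0 irred root by blast
  then show ?thesis
    by simp
qed

lemma theta_nonzero: "\<theta> \<noteq> 0"
  using rat_lin_indep[of 0 1 0 0] by auto

lemma rat_span_coeffs_unique:
  assumes "of_rat A + of_rat B * \<theta> ^ 2 = of_rat A' + of_rat B' * \<theta> ^ 2"
  shows "A = A' \<and> B = B'"
  using assms rat_lin_indep[of "A - A'" 0 "B - B'" 0] by (simp add: of_rat_diff algebra_simps)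

lemma rat_span_mult_eq:
  "(of_rat A + of_rat B * \<theta> ^ 2) * (of_rat C + of_rat D * \<theta> ^ 2) =
     of_rat (A * C - b * B * D) + of_rat (A * D + B * C - a * B * D) * \<theta> ^ 2"
  using theta_pow4 by (simp only: of_rat_add of_rat_diff of_rat_mult) algebra

lemma rat_span_mult:
  assumes "u \<in> rat_span (\<theta> ^ 2)" "v \<in> rat_span (\<theta> ^ 2)"
  shows "u * v \<in> rat_span (\<theta> ^ 2)"
  using assms by (elim rat_spanE) (simp only: rat_span_mult_eq rat_spanI)

lemma rat_span_inverse:
  assumes "u \<in> rat_span (\<theta> ^ 2)"
  shows "inverse u \<in> rat_span (\<theta> ^ 2)"
proof (cases "u = 0")
  case False
  obtain A B where u: "u = of_rat A + of_rat B * \<theta> ^ 2"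
    using assms by (elim rat_spanE)
  \<comment> \<open>the conjugate of \<open>\<theta>\<^sup>2\<close> over \<open>\<rat>\<close> is \<open>- a - \<theta>\<^sup>2\<close>\<close>
  define N where "N = A * A - a * A * B + b * B * B"
  have conj: "u * (of_rat (A - a * B) + of_rat (- B) * \<theta> ^ 2) = of_rat N"
    unfolding u rat_span_mult_eq N_def by (simp add: algebra_simps)
  have "N \<noteq> 0"
  proof
    assume "N = 0"
    with conj False have "of_rat (A - a * B) + of_rat (- B) * \<theta> ^ 2 = of_rat 0 + of_rat 0 * \<theta> ^ 2"
      by simp
    then have "A - a * B = 0 \<and> - B = 0"
      by (rule rat_span_coeffs_unique)
    with False u show False
      by simp
  qed
  with conj False have "inverse u = (of_rat (A - a * B) + of_rat (- B) * \<theta> ^ 2) * inverse (of_rat N)"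
    by (simp add: field_simps)
  then show ?thesis
    by (metis rat_span_mult rat_spanI of_rat_in_rat_span of_rat_inverse)
qed (simp add: zero_in_rat_span)

lemma tower_span_coeffs_eq_0:
  assumes "u \<in> rat_span (\<theta> ^ 2)" "v \<in> rat_span (\<theta> ^ 2)" "u + v * \<theta> = 0"
  shows "u = 0 \<and> v = 0"
proof -
  obtain A B C D where u: "u = of_rat A + of_rat B * \<theta> ^ 2" and v: "v = of_rat C + of_rat D * \<theta> ^ 2"
    using assms(1,2) by (elim rat_spanE)
  have "of_rat A + of_rat C * \<theta> + of_rat B * \<theta> ^ 2 + of_rat D * \<theta> ^ 3 = 0"
    using assms(3) unfolding u v by (simp add: algebra_simps power2_eq_square power3_eq_cube)
  then have "A = 0 \<and> C = 0 \<and> B = 0 \<and> D = 0"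
    by (rule rat_lin_indep)
  then show ?thesis
    unfolding u v by simp
qed

lemma tower_spanI: "u \<in> rat_span (\<theta> ^ 2) \<Longrightarrow> v \<in> rat_span (\<theta> ^ 2) \<Longrightarrow> u + v * \<theta> \<in> tower_span \<theta>"
  unfolding tower_span_def by blast

lemma is_subfield_tower_span: "is_subfield (tower_span \<theta>)"
  unfolding is_subfield_def
proof (intro conjI ballI impI)
  show "0 \<in> tower_span \<theta>"
    using tower_spanI[OF zero_in_rat_span zero_in_rat_span] by simp
  show "1 \<in> tower_span \<theta>"
    using tower_spanI[OF one_in_rat_span zero_in_rat_span] by simp
  fix x y
  assume "x \<in> tower_span \<theta>" "y \<in> tower_span \<theta>"
  then obtain u v u' v' where uv: "u \<in> rat_span (\<theta> ^ 2)" "v \<in> rat_span (\<theta> ^ 2)"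
    "u' \<in> rat_span (\<theta> ^ 2)" "v' \<in> rat_span (\<theta> ^ 2)"
    and x: "x = u + v * \<theta>" and y: "y = u' + v' * \<theta>"
    unfolding tower_span_def by blast
  have sum: "x + y = (u + u') + (v + v') * \<theta>"
    unfolding x y by algebra
  show "x + y \<in> tower_span \<theta>"
    unfolding sum using uv by (intro tower_spanI rat_span_add)
  have prod: "x * y = (u * u' + v * v' * \<theta> ^ 2) + (u * v' + u' * v) * \<theta>"
    unfolding x y by algebra
  show "x * y \<in> tower_span \<theta>"
    unfolding prod using uv by (intro tower_spanI rat_span_add rat_span_mult self_in_rat_span)
next
  fix x
  assume "x \<in> tower_span \<theta>"
  then obtain u v where uv: "u \<in> rat_span (\<theta> ^ 2)" "v \<in> rat_span (\<theta> ^ 2)" and x: "x = u + v * \<theta>"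
    unfolding tower_span_def by blast
  have minus: "- x = - u + - v * \<theta>"
    unfolding x by simp
  show "- x \<in> tower_span \<theta>"
    unfolding minus using uv by (intro tower_spanI rat_span_uminus)
  assume "x \<noteq> 0"
  have "u - v * \<theta> \<noteq> 0"
    using tower_span_coeffs_eq_0[OF uv(1) rat_span_uminus[OF uv(2)]] \<open>x \<noteq> 0\<close> x by auto
  define n where "n = u * u - v * v * \<theta> ^ 2"
  have xn: "x * (u - v * \<theta>) = n"
    unfolding x n_def by algebra
  with \<open>x \<noteq> 0\<close> \<open>u - v * \<theta> \<noteq> 0\<close> have "n \<noteq> 0"
    by auto
  with xn \<open>x \<noteq> 0\<close> have "inverse x = (u - v * \<theta>) * inverse n"
    by (auto simp: field_simps)
  then have inverse_x: "inverse x = u * inverse n + (- v * inverse n) * \<theta>"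
    by (simp add: algebra_simps)
  have "inverse n \<in> rat_span (\<theta> ^ 2)"
    unfolding n_def using uv by (intro rat_span_inverse rat_span_diff rat_span_mult self_in_rat_span)
  then show "inverse x \<in> tower_span \<theta>"
    unfolding inverse_x using uv by (intro tower_spanI rat_span_mult rat_span_uminus)
qed

lemma gen_field_subset_tower_span: "gen_field \<theta> \<subseteq> tower_span \<theta>"
proof (rule gen_field_least[OF is_subfield_tower_span])
  show "\<theta> \<in> tower_span \<theta>"
    using tower_spanI[OF zero_in_rat_span one_in_rat_span] by simp
qed

lemma sqrt_in_rat_span_imp_discriminant_square:
  assumes "u \<in> rat_span (\<theta> ^ 2)" and u_sq: "u ^ 2 = of_rat r" and nsq: "of_rat r \<notin> rat_squares"
  shows "of_rat (r * (a ^ 2 - 4 * b)) \<in> rat_squares"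
proof -
  obtain A B where u: "u = of_rat A + of_rat B * \<theta> ^ 2"
    using assms(1) by (elim rat_spanE)
  have "of_rat (A * A - b * B * B) + of_rat (A * B + B * A - a * B * B) * \<theta> ^ 2 = u ^ 2"
    unfolding u power2_eq_square[of "_ + _"] rat_span_mult_eq ..
  also have "\<dots> = of_rat r + of_rat 0 * \<theta> ^ 2"
    using u_sq by simp
  finally have "A * A - b * B * B = r \<and> A * B + B * A - a * B * B = 0"
    by (rule rat_span_coeffs_unique)
  then have r: "r = A * A - b * B * B" and "B * (2 * A - a * B) = 0"
    by (auto simp: algebra_simps)
  moreover have "B \<noteq> 0"
    using nsq r by (auto simp: of_rat_in_rat_squares_iff power2_eq_square)
  ultimately have A: "A = a * B / 2"
    by simp
  have "r * (a ^ 2 - 4 * b) = (B * (a ^ 2 - 4 * b) / 2) ^ 2"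
    unfolding r A by (simp add: field_simps power2_eq_square)
  then show ?thesis
    by (auto simp: of_rat_in_rat_squares_iff)
qed

lemma theta_square_eq_rat_mult_squareE:
  assumes "s \<in> rat_span (\<theta> ^ 2)" and theta_sq: "\<theta> ^ 2 = of_rat r * s ^ 2"
  obtains c where "b = c ^ 2" and "\<exists>q. r * (2 * c - a) = q ^ 2"
proof -
  obtain P Q where s: "s = of_rat P + of_rat Q * \<theta> ^ 2"
    using assms(1) by (elim rat_spanE)
  have "of_rat (r * (P * P - b * Q * Q)) + of_rat (r * (P * Q + Q * P - a * Q * Q)) * \<theta> ^ 2
      = of_rat r * s ^ 2"
    unfolding s power2_eq_square[of "_ + _"] rat_span_mult_eq by (simp add: of_rat_mult distrib_left mult.assoc)
  also have "\<dots> = of_rat 0 + of_rat 1 * \<theta> ^ 2"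
    using theta_sq by simp
  finally have "r * (P * P - b * Q * Q) = 0 \<and> r * (P * Q + Q * P - a * Q * Q) = 1"
    by (rule rat_span_coeffs_unique)
  then have PQ: "r * (P * P - b * Q * Q) = 0" and r: "r * (2 * P * Q - a * Q * Q) = 1"
    by (auto simp: algebra_simps)
  then have "r \<noteq> 0" and "Q \<noteq> 0"
    by auto
  with PQ have "b = (P / Q) ^ 2"
    by (simp add: field_simps power2_eq_square)
  moreover have "r * (2 * (P / Q) - a) = (1 / Q) ^ 2"
    using r \<open>Q \<noteq> 0\<close> by (simp add: field_simps power2_eq_square)
  ultimately show ?thesis
    using that by blast
qed

lemma squares_in_gen_field_imp_criterion:
  assumes "of_rat r \<in> squares_in (gen_field \<theta>)" and nsq: "of_rat r \<notin> rat_squares"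
  shows "of_rat (r * (a ^ 2 - 4 * b)) \<in> rat_squares \<or>
    of_rat r * (- of_rat a + 2 * csqrt (of_rat b)) \<in> rat_squares \<or>
    of_rat r * (- of_rat a - 2 * csqrt (of_rat b)) \<in> rat_squares"
proof -
  obtain y where "y \<in> gen_field \<theta>" and y_sq: "y ^ 2 = of_rat r"
    using assms(1) unfolding squares_in_def by auto
  then obtain u v where u: "u \<in> rat_span (\<theta> ^ 2)" and v: "v \<in> rat_span (\<theta> ^ 2)" and y: "y = u + v * \<theta>"
    using gen_field_subset_tower_span unfolding tower_span_def by blast
  have "(u * u + v * v * \<theta> ^ 2 - of_rat r) + ((u + u) * v) * \<theta> = y ^ 2 - of_rat r"
    unfolding y by algebra
  also have "\<dots> = 0"
    using y_sq by simp
  finally have "(u * u + v * v * \<theta> ^ 2 - of_rat r) + ((u + u) * v) * \<theta> = 0" .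
  moreover have "u * u + v * v * \<theta> ^ 2 - of_rat r \<in> rat_span (\<theta> ^ 2)"
    using u v by (intro rat_span_diff rat_span_add rat_span_mult self_in_rat_span of_rat_in_rat_span)
  moreover have "(u + u) * v \<in> rat_span (\<theta> ^ 2)"
    using u v by (intro rat_span_add rat_span_mult)
  ultimately have "(u + u) * v = 0"
    using tower_span_coeffs_eq_0 by blast
  then consider "v = 0" | "u = 0"
    by auto
  then show ?thesis
  proof cases
    case 1
    then show ?thesis
      using sqrt_in_rat_span_imp_discriminant_square[OF u _ nsq] y_sq y by simp
  next
    case 2
    have "v \<noteq> 0"
      using nsq y_sq unfolding y 2 by (auto simp: of_rat_in_rat_squares_iff)
    with y_sq have "\<theta> ^ 2 = of_rat r * inverse v ^ 2"
      unfolding y 2 by (auto simp: field_simps)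
    then obtain c q where c: "b = c ^ 2" and q: "r * (2 * c - a) = q ^ 2"
      using theta_square_eq_rat_mult_squareE[OF rat_span_inverse[OF v]] by blast
    have "of_rat r * (- of_rat a + 2 * of_rat c) = (of_rat (r * (2 * c - a)) :: complex)"
      by (simp add: of_rat_mult of_rat_diff algebra_simps)
    then have "of_rat r * (- of_rat a + 2 * of_rat c) \<in> rat_squares"
      using q by (auto simp: of_rat_in_rat_squares_iff)
    moreover have "csqrt (of_rat b) = of_rat c \<or> csqrt (of_rat b) = - of_rat c"
      using c power2_eq_iff[of "csqrt (of_rat b)" "of_rat c"] by (simp add: of_rat_power)
    ultimately show ?thesis
      by auto
  qed
qed

lemma discriminant_eq_square: "(of_rat a + 2 * \<theta> ^ 2) ^ 2 = of_rat (a ^ 2 - 4 * b)"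
  using theta_pow4 by (simp only: of_rat_diff of_rat_mult of_rat_power of_rat_numeral_eq) algebra

lemma theta_plus_sqrt_b_div_theta_square:
  assumes "z ^ 2 = of_rat b"
  shows "(\<theta> + z / \<theta>) ^ 2 = - of_rat a + 2 * z"
proof -
  have "\<theta> * (\<theta> + z / \<theta>) = \<theta> ^ 2 + z"
    using theta_nonzero by (simp add: distrib_left power2_eq_square)
  then have "\<theta> ^ 2 * (\<theta> + z / \<theta>) ^ 2 = (\<theta> ^ 2 + z) ^ 2"
    by (metis power_mult_distrib)
  also have "\<dots> = \<theta> ^ 2 * (- of_rat a + 2 * z)"
    using theta_pow4 assms by algebra
  finally show ?thesis
    using theta_nonzero by simp
qed

lemma squares_in_gen_field_if_discriminant:
  assumes "of_rat (r * (a ^ 2 - 4 * b)) \<in> rat_squares"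
  shows "of_rat r \<in> squares_in (gen_field \<theta>)"
proof -
  obtain s where s: "r * (a ^ 2 - 4 * b) = s ^ 2"
    using assms by (auto simp: of_rat_in_rat_squares_iff)
  define w where "w = of_rat a + 2 * \<theta> ^ 2"
  have "of_rat r * w ^ 2 = of_rat (r * (a ^ 2 - 4 * b))"
    unfolding w_def discriminant_eq_square by (simp add: of_rat_mult)
  also have "\<dots> = of_rat s ^ 2"
    by (simp add: s of_rat_power)
  finally have "of_rat r * w ^ 2 = of_rat s ^ 2" .
  moreover have "w \<noteq> 0"
    using rat_span_coeffs_unique[of a 2 0 0] unfolding w_def by auto
  moreover have "w \<in> gen_field \<theta>"
    unfolding w_def power2_eq_square using is_subfield_gen_field
    by (intro subfield_add subfield_mult subfield_of_rat[of _ 2, simplified] subfield_of_rat in_gen_field)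
  ultimately show ?thesis
    by (intro squares_in_gen_field_if_mult_square)
qed

lemma squares_in_gen_field_if_sqrt_b:
  assumes z_sq: "z ^ 2 = of_rat b" and "r \<noteq> 0"
    and "of_rat r * (- of_rat a + 2 * z) \<in> rat_squares"
  shows "of_rat r \<in> squares_in (gen_field \<theta>)"
proof -
  obtain s where s: "of_rat r * (- of_rat a + 2 * z) = of_rat s ^ 2"
    using assms(3) unfolding rat_squares_def by auto
  define c where "c = (s ^ 2 / r + a) / 2"
  have "of_rat (s ^ 2 / r) = of_rat s ^ 2 / of_rat r"
    by (simp add: of_rat_divide of_rat_power)
  also have "\<dots> = - of_rat a + 2 * z"
    unfolding s[symmetric] using \<open>r \<noteq> 0\<close> by simp
  finally have z: "z = of_rat c"
    unfolding c_def by (simp add: of_rat_divide of_rat_add)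
  define w where "w = \<theta> + z / \<theta>"
  have theta_w: "\<theta> * w = \<theta> ^ 2 + z"
    unfolding w_def using theta_nonzero by (simp add: distrib_left power2_eq_square)
  have "w \<noteq> 0"
  proof
    assume "w = 0"
    then have "of_rat c + of_rat 1 * \<theta> ^ 2 = of_rat 0 + of_rat 0 * \<theta> ^ 2"
      using theta_w z by (simp add: add.commute)
    then have "c = 0 \<and> (1 :: rat) = 0"
      by (rule rat_span_coeffs_unique)
    then show False
      by simp
  qed
  moreover have "w \<in> gen_field \<theta>"
    unfolding w_def z divide_inverse using is_subfield_gen_field
    by (intro subfield_add subfield_mult subfield_inverse subfield_of_rat in_gen_field)
  moreover have "of_rat r * w ^ 2 = of_rat s ^ 2"
    using s theta_plus_sqrt_b_div_theta_square[OF z_sq] unfolding w_def by simp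
  ultimately show ?thesis
    by (intro squares_in_gen_field_if_mult_square)
qed

end

theorem lemma3p2:
  fixes a b r :: rat and \<theta> :: complex
  assumes irr: "irreducible [:b, 0, a, 0, 1:]"
    and root: "poly (map_poly of_rat [:b, 0, a, 0, 1:]) \<theta> = 0"
    and nsq: "of_rat r \<notin> rat_squares"
  shows "of_rat r \<in> squares_in (gen_field \<theta>) \<longleftrightarrow>
    (of_rat (r * (a ^ 2 - 4 * b)) \<in> rat_squares \<or>
     of_rat r * (- of_rat a + 2 * csqrt (of_rat b)) \<in> rat_squares \<or>
     of_rat r * (- of_rat a - 2 * csqrt (of_rat b)) \<in> rat_squares)"
proof -
  interpret biquadratic_root a b \<theta>
    using irr root by unfold_locales
  have "r \<noteq> 0"
    using nsq by (auto simp: of_rat_in_rat_squares_iff)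
  then have "of_rat r * (- of_rat a - 2 * csqrt (of_rat b)) \<in> rat_squares \<Longrightarrow>
      of_rat r \<in> squares_in (gen_field \<theta>)"
    using squares_in_gen_field_if_sqrt_b[of "- csqrt (of_rat b)" r] by simp
  then show ?thesis
    using squares_in_gen_field_imp_criterion[OF _ nsq] squares_in_gen_field_if_discriminant
      squares_in_gen_field_if_sqrt_b[of "csqrt (of_rat b)" r] \<open>r \<noteq> 0\<close>
    by auto
qed

end
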